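(* For each $i\in\{1,\dots,n\}$ let $(X_{i,1},Y_{i,1}),\dots,(X_{i,k},Y_{i,k})$ be i.i.d. random vectors in $\mathbb R^2$ with common density $f_i$ satisfying $f_i\in L_\infty(\mathbb R^2)$, $\|f_i\|_{L_\infty(B((0,0),R))}\le C_0$, and $f_i=0$ outside $B((0,0),R)$, where $R,C_0>0$; the families for different $i$ are mutually independent. For $(x,y)\in B((0,0),R)$ let $Z^i(x,y)=\min_{1\le j\le k}\sqrt{(X_{i,j}-x)^2+(Y_{i,j}-y)^2}$ and $\overline Z_n(x,y)=\frac1n\sum_{i=1}^nZ^i(x,y)$. Then for every $\eta>0$ and $\delta\in(0,1)$, if $n>\frac{2R^2}{\eta^2}\ln\frac2\delta$, $$\Pr\Big[\min_{(x,y)\in B((0,0),R)}\overline Z_n(x,y)\ge\frac{1}{4\pi RC_0(k+1)}-\eta\Big]>1-\delta.$$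
   Context: $B((0,0),R)$ denotes the closed Euclidean disk of radius $R$ centered at the origin. *)

theory Defs
  imports "HOL-Probability.Probability"
begin

definition nearest_dist :: "nat \<Rightarrow> (nat \<Rightarrow> nat \<Rightarrow> 'a \<Rightarrow> real \<times> real) \<Rightarrow> nat \<Rightarrow> 'a \<Rightarrow> real \<times> real \<Rightarrow> real" where
  "nearest_dist k P i \<omega> z = Min ((\<lambda>j. dist (P i j \<omega>) z) ` {1..k})"

definition mean_nearest_dist :: "nat \<Rightarrow> nat \<Rightarrow> (nat \<Rightarrow> nat \<Rightarrow> 'a \<Rightarrow> real \<times> real) \<Rightarrow> 'a \<Rightarrow> real \<times> real \<Rightarrow> real" where
  "mean_nearest_dist n k P \<omega> z = (\<Sum>i=1..n. nearest_dist k P i \<omega> z) / real n"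

end

theory Submission
  imports Defs
begin

(*
  Put L = 1 / (4 pi R C0 (k + 1)) and cover the disc by a grid G of mesh L with at most
  (2R/L + 3)^2 points. If the mean nearest distance drops below L at some z, then more than n/2
  of the families have a point within 2L of z, hence within 3L of the grid point next to z.
  For a fixed grid point g, each family hits B(g, 3L) with probability at most
  p = k C0 pi (3L)^2, and p <= 9/64 because a probability density bounded by C0 and supported in
  the disc forces C0 pi R^2 >= 1. By independence, more than n/2 hits occur with probability at
  most 2^n p^(n div 2 + 1) <= exp (-7n/32), and the union bound over G stays below delta once
  n > 2 (R/L)^2 ln (2/delta), which the hypothesis guarantees when eta < L; for eta >= L the claim
  is trivial. So the argument actually yields the bound L, eta entering only through n.
*)

lemma nn_integral_density_indicator_le:
  fixes f :: "'b::euclidean_space \<Rightarrow> real"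
  assumes "AE z in lborel. z \<in> S \<longrightarrow> f z \<le> C" and "S \<in> sets lborel"
  shows "(\<integral>\<^sup>+z. ennreal (f z) * indicator S z \<partial>lborel) \<le> ennreal C * emeasure lborel S"
proof -
  have "(\<integral>\<^sup>+z. ennreal (f z) * indicator S z \<partial>lborel) \<le> (\<integral>\<^sup>+z. ennreal C * indicator S z \<partial>lborel)"
    using assms(1) by (intro nn_integral_mono_AE) (auto elim!: eventually_mono intro: ennreal_leI simp: indicator_def)
  also have "\<dots> = ennreal C * emeasure lborel S"
    using assms(2) by (rule nn_integral_cmult_indicator)
  finally show ?thesis .
qed

lemma emeasure_distributed_le_density_bound:
  fixes X :: "'a \<Rightarrow> 'b::euclidean_space"
  assumes "distributed M lborel X (\<lambda>z. ennreal (f z))"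
    and "AE z in lborel. z \<in> S \<longrightarrow> f z \<le> C" and "S \<in> sets lborel"
  shows "emeasure M (X -` S \<inter> space M) \<le> ennreal C * emeasure lborel S"
  using distributed_emeasure[OF assms(1,3)] nn_integral_density_indicator_le[OF assms(2,3)] by simp

lemma emeasure_lborel_ball_2: "r \<ge> 0 \<Longrightarrow> emeasure lborel (ball (c :: real \<times> real) r) = ennreal (pi * r^2)"
  by (subst emeasure_ball) (auto simp: unit_ball_vol_2 mult.commute power2_eq_square)

lemma emeasure_lborel_cball_2: "r \<ge> 0 \<Longrightarrow> emeasure lborel (cball (c :: real \<times> real) r) = ennreal (pi * r^2)"
  by (subst emeasure_cball) (auto simp: unit_ball_vol_2 mult.commute power2_eq_square)

lemma (in prob_space) prob_distributed_ball_le: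
  fixes X :: "'a \<Rightarrow> real \<times> real"
  assumes "distributed M lborel X (\<lambda>z. ennreal (f z))"
    and "AE z in lborel. f z \<le> C" and "C \<ge> 0" and "r \<ge> 0"
  shows "prob (X -` ball c r \<inter> space M) \<le> C * pi * r^2"
proof -
  have "emeasure M (X -` ball c r \<inter> space M) \<le> ennreal C * ennreal (pi * r^2)"
    using emeasure_distributed_le_density_bound[OF assms(1), of "ball c r" C] assms(2,4)
    by (simp add: emeasure_lborel_ball_2 eventually_mono)
  then show ?thesis
    using assms(3,4) by (simp add: emeasure_eq_measure ennreal_mult[symmetric] ennreal_le_iff mult.assoc)
qed

lemma (in prob_space) density_bound_area_ge_1:
  fixes X :: "'a \<Rightarrow> real \<times> real"
  assumes "distributed M lborel X (\<lambda>z. ennreal (f z))"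
    and "AE z in lborel. z \<in> cball 0 R \<longrightarrow> f z \<le> C" and "\<And>z. z \<notin> cball 0 R \<Longrightarrow> f z = 0"
    and "C \<ge> 0" and "R \<ge> 0"
  shows "1 \<le> C * pi * R^2"
proof -
  have "1 = emeasure M (X -` UNIV \<inter> space M)"
    by (simp add: emeasure_space_1)
  also have "\<dots> = (\<integral>\<^sup>+z. ennreal (f z) * indicator (cball 0 R) z \<partial>lborel)"
    using distributed_emeasure[OF assms(1), of UNIV] assms(3)
    by (auto intro!: nn_integral_cong simp: indicator_def)
  also have "\<dots> \<le> ennreal C * ennreal (pi * R^2)"
    using nn_integral_density_indicator_le[OF assms(2)] assms(5) by (simp add: emeasure_lborel_cball_2)
  finally show ?thesis
    using assms(4,5) by (simp add: ennreal_mult[symmetric] mult.assoc)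
qed

lemma nearest_dist_nonneg: "k \<ge> 1 \<Longrightarrow> 0 \<le> nearest_dist k P i \<omega> z"
  by (simp add: nearest_dist_def Min_ge_iff)

lemma nearest_dist_less_iff:
  assumes "k \<ge> 1"
  shows "nearest_dist k P i \<omega> z < t \<longleftrightarrow> (\<exists>j\<in>{1..k}. dist (P i j \<omega>) z < t)"
  using assms by (simp add: nearest_dist_def Min_less_iff)

lemma nearest_dist_le_add_dist:
  assumes "k \<ge> 1"
  shows "nearest_dist k P i \<omega> z \<le> nearest_dist k P i \<omega> w + dist z w"
proof -
  have "nearest_dist k P i \<omega> w \<in> (\<lambda>j. dist (P i j \<omega>) w) ` {1..k}"
    unfolding nearest_dist_def using assms by (intro Min_in) auto
  then obtain j where j: "j \<in> {1..k}" "nearest_dist k P i \<omega> w = dist (P i j \<omega>) w"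
    by auto
  have "nearest_dist k P i \<omega> z \<le> dist (P i j \<omega>) z"
    unfolding nearest_dist_def using j(1) by (intro Min_le) auto
  also have "\<dots> \<le> dist (P i j \<omega>) w + dist z w"
    by (metis dist_commute dist_triangle)
  finally show ?thesis
    using j(2) by simp
qed

lemma mean_nearest_dist_nonneg: "k \<ge> 1 \<Longrightarrow> 0 \<le> mean_nearest_dist n k P \<omega> z"
  unfolding mean_nearest_dist_def by (intro divide_nonneg_nonneg sum_nonneg nearest_dist_nonneg) auto

lemma mean_nearest_dist_le_add_dist:
  assumes "k \<ge> 1"
  shows "mean_nearest_dist n k P \<omega> z \<le> mean_nearest_dist n k P \<omega> w + dist z w"
proof (cases "n = 0")
  case False
  have "(\<Sum>i=1..n. nearest_dist k P i \<omega> z) \<le> (\<Sum>i=1..n. nearest_dist k P i \<omega> w + dist z w)"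
    by (intro sum_mono nearest_dist_le_add_dist assms)
  then show ?thesis
    using False unfolding mean_nearest_dist_def by (simp add: sum.distrib field_simps)
qed (simp add: mean_nearest_dist_def)

lemma lipschitz_mean_nearest_dist:
  assumes "k \<ge> 1"
  shows "1-lipschitz_on S (mean_nearest_dist n k P \<omega>)"
proof (rule lipschitz_onI)
  fix z w
  show "dist (mean_nearest_dist n k P \<omega> z) (mean_nearest_dist n k P \<omega> w) \<le> 1 * dist z w"
    using mean_nearest_dist_le_add_dist[OF assms, of n P \<omega> z w]
      mean_nearest_dist_le_add_dist[OF assms, of n P \<omega> w z]
    by (simp add: dist_real_def dist_commute)
qed simp

lemma borel_measurable_mean_nearest_dist:
  assumes "\<And>i j. i \<in> {1..n} \<Longrightarrow> j \<in> {1..k} \<Longrightarrow> P i j \<in> borel_measurable M"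
  shows "(\<lambda>\<omega>. mean_nearest_dist n k P \<omega> z) \<in> borel_measurable M"
  unfolding mean_nearest_dist_def nearest_dist_def
  by (intro borel_measurable_divide borel_measurable_sum borel_measurable_Min borel_measurable_dist
      borel_measurable_const assms) auto

lemma card_less_twice_mean_gt_half:
  fixes a :: "'i \<Rightarrow> real"
  assumes "finite I" and "\<And>i. i \<in> I \<Longrightarrow> 0 \<le> a i" and "(\<Sum>i\<in>I. a i) < real (card I) * L"
  shows "card I div 2 + 1 \<le> card {i\<in>I. a i < 2 * L}"
proof -
  define B where "B = {i\<in>I. 2 * L \<le> a i}"
  have "finite B" "B \<subseteq> I"
    unfolding B_def using assms(1) by auto
  have "real (card B) * (2 * L) \<le> (\<Sum>i\<in>B. a i)"
    using sum_mono[of B "\<lambda>_. 2 * L" a] unfolding B_def by simp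
  also have "\<dots> \<le> (\<Sum>i\<in>I. a i)"
    using \<open>B \<subseteq> I\<close> assms(1,2) by (intro sum_mono2) auto
  finally have "real (card B) * (2 * L) < real (card I) * L"
    using assms(3) by linarith
  moreover have "L > 0"
  proof (rule ccontr)
    assume "\<not> L > 0"
    then have "real (card I) * L \<le> 0"
      by (simp add: mult_nonneg_nonpos)
    moreover have "0 \<le> (\<Sum>i\<in>I. a i)"
      using assms(2) by (rule sum_nonneg)
    ultimately show False
      using assms(3) by linarith
  qed
  ultimately have "2 * card B < card I"
    by (simp flip: of_nat_less_iff)
  moreover have "card {i\<in>I. a i < 2 * L} = card (I - B)"
    unfolding B_def by (intro arg_cong[where f = card]) auto
  ultimately show ?thesis
    using card_Diff_subset[OF \<open>finite B\<close> \<open>B \<subseteq> I\<close>] by linarith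
qed

lemma mean_nearest_dist_less_imp_many_near:
  assumes "k \<ge> 1" and "n > 0" and "mean_nearest_dist n k P \<omega> z < L" and "dist z g \<le> L"
  shows "n div 2 + 1 \<le> card {i\<in>{1..n}. \<exists>j\<in>{1..k}. P i j \<omega> \<in> ball g (3 * L)}"
proof -
  have "\<And>i. i \<in> {1..n} \<Longrightarrow> 0 \<le> nearest_dist k P i \<omega> z"
    using assms(1) by (rule nearest_dist_nonneg)
  moreover have "(\<Sum>i\<in>{1..n}. nearest_dist k P i \<omega> z) < real (card {1..n}) * L"
    using assms(2,3) by (simp add: mean_nearest_dist_def divide_less_eq mult.commute)
  ultimately have "card {1..n} div 2 + 1 \<le> card {i\<in>{1..n}. nearest_dist k P i \<omega> z < 2 * L}"
    by (rule card_less_twice_mean_gt_half[OF finite_atLeastAtMost])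
  also have "\<dots> \<le> card {i\<in>{1..n}. \<exists>j\<in>{1..k}. P i j \<omega> \<in> ball g (3 * L)}"
  proof (rule card_mono)
    show "{i\<in>{1..n}. nearest_dist k P i \<omega> z < 2 * L} \<subseteq> {i\<in>{1..n}. \<exists>j\<in>{1..k}. P i j \<omega> \<in> ball g (3 * L)}"
    proof (intro subsetI, elim CollectE conjE)
      fix i assume "i \<in> {1..n}" "nearest_dist k P i \<omega> z < 2 * L"
      then obtain j where "j \<in> {1..k}" "dist (P i j \<omega>) z < 2 * L"
        by (auto dest: nearest_dist_less_iff[OF assms(1), THEN iffD1])
      moreover have "dist g (P i j \<omega>) \<le> dist (P i j \<omega>) z + dist z g"
        by (metis dist_commute dist_triangle)
      ultimately have "P i j \<omega> \<in> ball g (3 * L)"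
        using assms(4) by simp
      then show "i \<in> {i\<in>{1..n}. \<exists>j\<in>{1..k}. P i j \<omega> \<in> ball g (3 * L)}"
        using \<open>i \<in> {1..n}\<close> \<open>j \<in> {1..k}\<close> by blast
    qed
  qed simp
  finally show ?thesis
    by (simp only: card_atLeastAtMost diff_Suc_1)
qed

lemma mean_nearest_dist_ge_if_few_near:
  assumes "k \<ge> 1" and "n > 0" and "z \<in> S"
    and net: "\<And>z. z \<in> S \<Longrightarrow> \<exists>g\<in>G. dist z g \<le> L"
    and few: "\<And>g. g \<in> G \<Longrightarrow> card {i\<in>{1..n}. \<exists>j\<in>{1..k}. P i j \<omega> \<in> ball g (3 * L)} \<le> n div 2"
  shows "L \<le> mean_nearest_dist n k P \<omega> z"
proof (rule ccontr)
  assume "\<not> L \<le> mean_nearest_dist n k P \<omega> z"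
  moreover obtain g where "g \<in> G" "dist z g \<le> L"
    using net[OF \<open>z \<in> S\<close>] by blast
  ultimately have "n div 2 + 1 \<le> card {i\<in>{1..n}. \<exists>j\<in>{1..k}. P i j \<omega> \<in> ball g (3 * L)}"
    by (intro mean_nearest_dist_less_imp_many_near[OF assms(1,2)]) simp_all
  then show False
    using few[OF \<open>g \<in> G\<close>] by simp
qed

lemma round_to_grid:
  fixes x h R :: real
  assumes "h > 0" and "\<bar>x\<bar> \<le> R"
  obtains a :: int where "a \<in> {-\<lceil>R/h\<rceil>..\<lceil>R/h\<rceil>}" and "\<bar>x - of_int a * h\<bar> \<le> h/2"
proof
  define a where "a = \<lfloor>x/h + 1/2\<rfloor>"
  have a: "of_int a \<le> x/h + 1/2" "x/h + 1/2 < of_int a + 1"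
    unfolding a_def by linarith+
  have "\<bar>x/h\<bar> \<le> R/h"
    using assms by (simp add: abs_divide divide_right_mono)
  then have "\<bar>real_of_int a\<bar> < real_of_int \<lceil>R/h\<rceil> + 1"
    using a le_of_int_ceiling[of "R/h"] by linarith
  then have "\<bar>a\<bar> < \<lceil>R/h\<rceil> + 1"
    by (metis of_int_abs of_int_less_iff of_int_1 of_int_add)
  then show "a \<in> {-\<lceil>R/h\<rceil>..\<lceil>R/h\<rceil>}"
    by auto
  have "\<bar>x/h - of_int a\<bar> \<le> 1/2"
    using a by linarith
  then have "\<bar>(x/h - of_int a) * h\<bar> \<le> 1/2 * h"
    using assms(1) by (simp add: abs_mult)
  then show "\<bar>x - of_int a * h\<bar> \<le> h/2"
    using assms(1) by (simp add: algebra_simps)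
qed

lemma round_to_grid_2:
  fixes h R :: real
  assumes "h > 0" and "z \<in> cball (0 :: real \<times> real) R"
  obtains a b :: int where "a \<in> {-\<lceil>R/h\<rceil>..\<lceil>R/h\<rceil>}" and "b \<in> {-\<lceil>R/h\<rceil>..\<lceil>R/h\<rceil>}"
    and "dist z (of_int a * h, of_int b * h) \<le> h"
proof -
  obtain x y where z: "z = (x, y)"
    by (cases z)
  have "\<bar>x\<bar> \<le> R" "\<bar>y\<bar> \<le> R"
    using assms(2) norm_fst_le[of x y] norm_snd_le[of y x] by (auto simp: z)
  then obtain a b where ab: "a \<in> {-\<lceil>R/h\<rceil>..\<lceil>R/h\<rceil>}" "b \<in> {-\<lceil>R/h\<rceil>..\<lceil>R/h\<rceil>}"
    and "\<bar>x - of_int a * h\<bar> \<le> h/2" "\<bar>y - of_int b * h\<bar> \<le> h/2"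
    using round_to_grid[OF assms(1)] by metis
  then have "(x - of_int a * h)^2 + (y - of_int b * h)^2 \<le> (h/2)^2 + (h/2)^2"
    using assms(1) by (intro add_mono; subst power2_le_iff_abs_le) auto
  also have "\<dots> \<le> h^2"
    by (simp add: power_divide)
  finally have "dist z (of_int a * h, of_int b * h) \<le> h"
    using assms(1) by (simp add: z dist_Pair_Pair dist_real_def real_sqrt_le_iff')
  with ab show ?thesis
    by (rule that)
qed

lemma finite_net_cball_2:
  fixes h R :: real
  assumes "h > 0" and "R \<ge> 0"
  obtains G :: "(real \<times> real) set"
  where "finite G" and "real (card G) \<le> (2*R/h + 3)^2"
    and "\<And>z. z \<in> cball 0 R \<Longrightarrow> \<exists>g\<in>G. dist z g \<le> h"
proof
  define N where "N = \<lceil>R/h\<rceil>"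
  define G where "G = (\<lambda>(a, b). (of_int a * h, of_int b * h)) ` ({-N..N} \<times> {-N..N})"
  show "finite G"
    unfolding G_def by simp
  have "R/h \<ge> 0"
    using assms by simp
  then have "N \<ge> 0" "of_int N \<le> R/h + 1"
    unfolding N_def by linarith+
  have "card G \<le> card ({-N..N} \<times> {-N..N})"
    unfolding G_def by (rule card_image_le) simp
  also have "\<dots> = nat (2*N + 1) ^ 2"
    by (simp add: card_cartesian_product power2_eq_square)
  finally have "real (card G) \<le> real (nat (2*N + 1)) ^ 2"
    by (simp flip: of_nat_power)
  also have "\<dots> = (2 * of_int N + 1) ^ 2"
    using \<open>N \<ge> 0\<close> by simp
  also have "\<dots> \<le> (2*R/h + 3)^2"
    using \<open>N \<ge> 0\<close> \<open>of_int N \<le> R/h + 1\<close> by (intro power_mono) auto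
  finally show "real (card G) \<le> (2*R/h + 3)^2" .
  fix z :: "real \<times> real"
  assume "z \<in> cball 0 R"
  then obtain a b where "a \<in> {-N..N}" "b \<in> {-N..N}" "dist z (of_int a * h, of_int b * h) \<le> h"
    unfolding N_def by (rule round_to_grid_2[OF assms(1)])
  then show "\<exists>g\<in>G. dist z g \<le> h"
    unfolding G_def by force
qed

lemma sets_Collect_forall_continuous_ge:
  fixes F :: "'a \<Rightarrow> 'b::{metric_space, second_countable_topology} \<Rightarrow> real"
  assumes "closed S"
    and cont: "\<And>\<omega>. \<omega> \<in> space M \<Longrightarrow> continuous_on S (F \<omega>)"
    and meas: "\<And>z. z \<in> S \<Longrightarrow> (\<lambda>\<omega>. F \<omega> z) \<in> borel_measurable M"
  shows "{\<omega> \<in> space M. \<forall>z\<in>S. c \<le> F \<omega> z} \<in> sets M"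
proof -
  obtain T where T: "countable T" "T \<subseteq> S" "S \<subseteq> closure T"
    by (rule separable)
  have "closure T = S"
    using T \<open>closed S\<close> by (simp add: closure_minimal subset_antisym)
  then have "{\<omega> \<in> space M. \<forall>z\<in>S. c \<le> F \<omega> z} = {\<omega> \<in> space M. \<forall>t\<in>T. c \<le> F \<omega> t}"
    using T(2) cont by (auto intro: continuous_ge_on_closure)
  also have "\<dots> \<in> sets M"
    using T meas by (intro sets.sets_Collect_countable_All') auto
  finally show ?thesis .
qed

lemma (in prob_space) events_mean_nearest_dist_ge:
  assumes "k \<ge> 1" and "\<And>i j. i \<in> {1..n} \<Longrightarrow> j \<in> {1..k} \<Longrightarrow> P i j \<in> borel_measurable M"
  shows "{\<omega> \<in> space M. \<forall>z\<in>cball 0 R. c \<le> mean_nearest_dist n k P \<omega> z} \<in> events"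
  using lipschitz_mean_nearest_dist[OF assms(1), THEN lipschitz_on_continuous_on]
    borel_measurable_mean_nearest_dist[OF assms(2)]
  by (intro sets_Collect_forall_continuous_ge) auto

lemma (in prob_space) indep_events_Ex_block:
  fixes X :: "'i \<Rightarrow> 'j \<Rightarrow> 'a \<Rightarrow> 'b"
  assumes indep: "indep_vars (\<lambda>_. N) (\<lambda>p. X (fst p) (snd p)) (I \<times> J)"
    and "finite J" and B: "\<And>i. i \<in> I \<Longrightarrow> B i \<in> sets N"
  shows "indep_events (\<lambda>i. {\<omega> \<in> space M. \<exists>j\<in>J. X i j \<omega> \<in> B i}) I"
proof -
  define E where "E = (\<lambda>p. {X (fst p) (snd p) -` A \<inter> space M | A. A \<in> sets N})"
  define F where "F = (\<lambda>i. sigma_sets (space M) (\<Union>p\<in>{i} \<times> J. E p))"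
  have "indep_sets E (\<Union>i\<in>I. {i} \<times> J)"
    using indep unfolding indep_vars_def2 E_def by (simp add: Sigma_def)
  then have indep_F: "indep_sets F I"
    unfolding F_def
  proof (rule indep_sets_collect_sigma)
    show "Int_stable (E p)" for p
    proof (rule Int_stableI)
      fix a b assume "a \<in> E p" "b \<in> E p"
      then obtain A A' where "A \<in> sets N" "A' \<in> sets N"
        and "a = X (fst p) (snd p) -` A \<inter> space M" "b = X (fst p) (snd p) -` A' \<inter> space M"
        unfolding E_def by auto
      then show "a \<inter> b \<in> E p"
        unfolding E_def by (intro CollectI exI[of _ "A \<inter> A'"]) auto
    qed
    show "disjoint_family_on (\<lambda>i. {i} \<times> J) I"
      by (auto simp: disjoint_family_on_def)
  qed
  have "{\<omega> \<in> space M. \<exists>j\<in>J. X i j \<omega> \<in> B i} \<in> F i" if "i \<in> I" for i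
  proof -
    have "(\<Union>p\<in>{i} \<times> J. E p) \<subseteq> Pow (space M)"
      unfolding E_def by auto
    then interpret F: sigma_algebra "space M" "F i"
      unfolding F_def by (rule sigma_algebra_sigma_sets)
    have "X i j -` B i \<inter> space M \<in> F i" if "j \<in> J" for j
      unfolding F_def E_def using \<open>j \<in> J\<close> B[OF \<open>i \<in> I\<close>] by (intro sigma_sets.Basic) force
    then have "(\<Union>j\<in>J. X i j -` B i \<inter> space M) \<in> F i"
      using \<open>finite J\<close> by (intro F.finite_UN) auto
    moreover have "(\<Union>j\<in>J. X i j -` B i \<inter> space M) = {\<omega> \<in> space M. \<exists>j\<in>J. X i j \<omega> \<in> B i}"
      by auto
    ultimately show ?thesis
      by simp
  qed
  then show ?thesis
    unfolding indep_events_def_alt by (intro indep_sets_mono_sets[OF indep_F]) auto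
qed

lemma Collect_card_ge_eq_Union:
  assumes "finite I"
  shows "{\<omega> \<in> \<Omega>. m \<le> card {i\<in>I. \<omega> \<in> A i}} = \<Omega> \<inter> (\<Union>S\<in>{S. S \<subseteq> I \<and> card S = m}. \<Inter>i\<in>S. A i)"
proof (intro equalityI subsetI)
  fix \<omega> assume "\<omega> \<in> {\<omega> \<in> \<Omega>. m \<le> card {i\<in>I. \<omega> \<in> A i}}"
  then obtain S where "S \<subseteq> {i\<in>I. \<omega> \<in> A i}" "card S = m" "\<omega> \<in> \<Omega>"
    by (auto elim: obtain_subset_with_card_n)
  then show "\<omega> \<in> \<Omega> \<inter> (\<Union>S\<in>{S. S \<subseteq> I \<and> card S = m}. \<Inter>i\<in>S. A i)"
    by blast
next
  fix \<omega> assume "\<omega> \<in> \<Omega> \<inter> (\<Union>S\<in>{S. S \<subseteq> I \<and> card S = m}. \<Inter>i\<in>S. A i)"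
  then obtain S where "S \<subseteq> {i\<in>I. \<omega> \<in> A i}" "card S = m" "\<omega> \<in> \<Omega>"
    by blast
  moreover have "finite {i\<in>I. \<omega> \<in> A i}"
    using assms by simp
  ultimately show "\<omega> \<in> {\<omega> \<in> \<Omega>. m \<le> card {i\<in>I. \<omega> \<in> A i}}"
    using card_mono by blast
qed

lemma (in prob_space) events_card_ge:
  assumes "finite I" and "A ` I \<subseteq> events"
  shows "{\<omega> \<in> space M. m \<le> card {i\<in>I. \<omega> \<in> A i}} \<in> events"
proof -
  have "finite {S. S \<subseteq> I \<and> card S = m}"
    using assms(1) by simp
  moreover have "(\<Inter>i\<in>S. A i) \<inter> space M \<in> events" if "S \<subseteq> I" for S
    using that assms finite_subset[OF that assms(1)]
    by (cases "S = {}") (auto intro!: sets.Int sets.finite_INT)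
  ultimately show ?thesis
    unfolding Collect_card_ge_eq_Union[OF assms(1)] Int_UN_distrib Int_commute[of "space M"]
    by (intro sets.finite_UN) auto
qed

lemma (in prob_space) prob_card_ge_le:
  assumes "indep_events A I" and "finite I" and "m \<ge> 1"
    and p: "\<And>i. i \<in> I \<Longrightarrow> prob (A i) \<le> p"
  shows "prob {\<omega> \<in> space M. m \<le> card {i\<in>I. \<omega> \<in> A i}} \<le> real (card I choose m) * p ^ m"
proof -
  define \<S> where "\<S> = {S. S \<subseteq> I \<and> card S = m}"
  have "finite \<S>"
    unfolding \<S>_def using \<open>finite I\<close> by simp
  have S: "S \<subseteq> I" "S \<noteq> {}" "finite S" "card S = m" if "S \<in> \<S>" for S
    using that \<open>m \<ge> 1\<close> \<open>finite I\<close> unfolding \<S>_def by (auto intro: finite_subset)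
  have A: "A ` I \<subseteq> events"
    using \<open>indep_events A I\<close> by (simp add: indep_events_def)
  then have ev: "(\<Inter>i\<in>S. A i) \<in> events" if "S \<in> \<S>" for S
    using S[OF that] by (intro sets.finite_INT) auto
  have "prob {\<omega> \<in> space M. m \<le> card {i\<in>I. \<omega> \<in> A i}} \<le> prob (\<Union>S\<in>\<S>. \<Inter>i\<in>S. A i)"
    unfolding Collect_card_ge_eq_Union[OF assms(2)] \<S>_def[symmetric]
    using \<open>finite \<S>\<close> ev by (intro finite_measure_mono sets.finite_UN) auto
  also have "\<dots> \<le> (\<Sum>S\<in>\<S>. prob (\<Inter>i\<in>S. A i))"
    using \<open>finite \<S>\<close> ev by (rule measure_UNION_le)
  also have "\<dots> \<le> (\<Sum>S\<in>\<S>. p ^ m)"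
  proof (rule sum_mono)
    fix S assume "S \<in> \<S>"
    have "prob (\<Inter>i\<in>S. A i) = (\<Prod>i\<in>S. prob (A i))"
      using \<open>indep_events A I\<close> S[OF \<open>S \<in> \<S>\<close>] by (simp add: indep_events_def)
    also have "\<dots> \<le> (\<Prod>i\<in>S. p)"
      using S[OF \<open>S \<in> \<S>\<close>] p by (intro prod_mono) auto
    finally show "prob (\<Inter>i\<in>S. A i) \<le> p ^ m"
      using S[OF \<open>S \<in> \<S>\<close>] by simp
  qed
  also have "\<dots> = real (card I choose m) * p ^ m"
    unfolding \<S>_def using n_subsets[OF \<open>finite I\<close>] by simp
  finally show ?thesis .
qed

lemma (in prob_space) prob_many_near_le:
  fixes P :: "'i \<Rightarrow> 'j \<Rightarrow> 'a \<Rightarrow> real \<times> real"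
  assumes indep: "indep_vars (\<lambda>_. lborel) (\<lambda>p. P (fst p) (snd p)) (I \<times> J)"
    and "finite I" and "finite J" and "m \<ge> 1" and "r \<ge> 0" and "C \<ge> 0"
    and distr: "\<And>i j. i \<in> I \<Longrightarrow> j \<in> J \<Longrightarrow> distributed M lborel (P i j) (\<lambda>z. ennreal (f i z))"
    and bound: "\<And>i. i \<in> I \<Longrightarrow> AE z in lborel. f i z \<le> C"
  shows "prob {\<omega> \<in> space M. m \<le> card {i\<in>I. \<exists>j\<in>J. P i j \<omega> \<in> ball g r}}
           \<le> real (card I choose m) * (real (card J) * (C * pi * r^2)) ^ m"
proof -
  define A where "A = (\<lambda>i. {\<omega> \<in> space M. \<exists>j\<in>J. P i j \<omega> \<in> ball g r})"
  have "prob (A i) \<le> real (card J) * (C * pi * r^2)" if "i \<in> I" for i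
  proof -
    have ev: "P i j -` ball g r \<inter> space M \<in> events" if "j \<in> J" for j
      using distributed_measurable[OF distr[OF \<open>i \<in> I\<close> that]] by simp
    have "prob (A i) = prob (\<Union>j\<in>J. P i j -` ball g r \<inter> space M)"
      unfolding A_def by (rule arg_cong[where f = prob]) blast
    also have "\<dots> \<le> (\<Sum>j\<in>J. prob (P i j -` ball g r \<inter> space M))"
      using \<open>finite J\<close> ev by (rule measure_UNION_le)
    also have "\<dots> \<le> (\<Sum>j\<in>J. C * pi * r^2)"
      using distr[OF that] bound[OF that] \<open>C \<ge> 0\<close> \<open>r \<ge> 0\<close>
      by (intro sum_mono prob_distributed_ball_le) auto
    finally show ?thesis
      by simp
  qed
  moreover have "indep_events A I"
    unfolding A_def using indep \<open>finite J\<close> by (rule indep_events_Ex_block) simp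
  ultimately have "prob {\<omega> \<in> space M. m \<le> card {i\<in>I. \<omega> \<in> A i}}
                     \<le> real (card I choose m) * (real (card J) * (C * pi * r^2)) ^ m"
    using \<open>finite I\<close> \<open>m \<ge> 1\<close> by (intro prob_card_ge_le) auto
  moreover have "{\<omega> \<in> space M. m \<le> card {i\<in>I. \<omega> \<in> A i}}
                   = {\<omega> \<in> space M. m \<le> card {i\<in>I. \<exists>j\<in>J. P i j \<omega> \<in> ball g r}}"
    unfolding A_def by auto
  ultimately show ?thesis
    by simp
qed

lemma (in prob_space) events_many_near:
  assumes "finite I" and "finite J" and "B \<in> sets borel"
    and "\<And>i j. i \<in> I \<Longrightarrow> j \<in> J \<Longrightarrow> P i j \<in> borel_measurable M"
  shows "{\<omega> \<in> space M. m \<le> card {i\<in>I. \<exists>j\<in>J. P i j \<omega> \<in> B}} \<in> events"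
proof -
  define A where "A = (\<lambda>i. {\<omega> \<in> space M. \<exists>j\<in>J. P i j \<omega> \<in> B})"
  have "A ` I \<subseteq> events"
    unfolding A_def using assms by (auto intro!: sets.sets_Collect_finite_Ex measurable_sets_borel)
  then have "{\<omega> \<in> space M. m \<le> card {i\<in>I. \<omega> \<in> A i}} \<in> events"
    using \<open>finite I\<close> by (rule events_card_ge[rotated])
  also have "{\<omega> \<in> space M. m \<le> card {i\<in>I. \<omega> \<in> A i}} = {\<omega> \<in> space M. m \<le> card {i\<in>I. \<exists>j\<in>J. P i j \<omega> \<in> B}}"
    unfolding A_def by auto
  finally show ?thesis .
qed

lemma quadratic_le_exp:
  fixes u :: real
  assumes "u \<ge> 8"
  shows "(2*u + 3)^2 \<le> 2 * exp (7*u^2/32 - 1/2)"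
proof -
  define w where "w = 7/8 + 7*u^2/128"
  have u2: "u^2 \<ge> 64"
    using power_mono[OF assms, of 2] by simp
  have "w \<le> exp (7*u^2/128 - 1/8)"
    using exp_ge_add_one_self[of "7*u^2/128 - 1/8"] unfolding w_def by simp
  then have "w^4 \<le> exp (7*u^2/128 - 1/8) ^ 4"
    by (rule power_mono) (simp add: w_def)
  also have "\<dots> = exp (7*u^2/32 - 1/2)"
    by (simp flip: exp_of_nat_mult add: field_simps)
  finally have "w^4 \<le> exp (7*u^2/32 - 1/2)" .
  moreover have "(2*u + 3)^2 \<le> 6*u^2"
  proof -
    have "8 * u \<le> u * u"
      using mult_right_mono[OF assms, of u] assms by simp
    moreover have "(2*u + 3)^2 = 4*(u*u) + 12*u + 9" "u^2 = u*u"
      by (simp_all add: power2_eq_square algebra_simps)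
    ultimately show ?thesis
      using assms by linarith
  qed
  moreover have "3*u^2 \<le> w^4"
  proof -
    have "w \<ge> 35/8" "w \<ge> 7*u^2/128"
      using u2 unfolding w_def by simp_all
    then have "(35/8)^3 * (7*u^2/128) \<le> w^3 * w"
      by (intro mult_mono power_mono) auto
    then show ?thesis
      using u2 by (simp add: power_divide power_Suc2[symmetric] del: power_Suc)
  qed
  ultimately show ?thesis
    by linarith
qed

lemma pow2_mult_pow_half_le_exp:
  fixes p :: real and n :: nat
  assumes "0 \<le> p" and "64 * p \<le> 9"
  shows "2^n * p^(n div 2 + 1) \<le> exp (- (7/32) * real n)"
proof -
  define m where "m = n div 2 + 1"
  have "n \<le> 2 * m"
    unfolding m_def by presburger
  have "4 * p \<le> exp (-7/16)"
    using exp_ge_add_one_self[of "-7/16"] assms(2) by linarith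
  have "(2::real)^n \<le> 2^(2*m)"
    using \<open>n \<le> 2 * m\<close> by (intro power_increasing) auto
  then have "(2::real)^n * p^m \<le> 4^m * p^m"
    using assms(1) by (intro mult_right_mono) (auto simp: power_mult)
  also have "\<dots> = (4 * p)^m"
    by (simp add: power_mult_distrib)
  also have "\<dots> \<le> exp (-7/16) ^ m"
    using \<open>4 * p \<le> exp (-7/16)\<close> assms(1) by (intro power_mono) auto
  also have "\<dots> = exp (- (7/16) * real m)"
    by (simp flip: exp_of_nat_mult add: mult.commute)
  also have "\<dots> \<le> exp (- (7/32) * real n)"
    using \<open>n \<le> 2 * m\<close> by (intro exp_mono) (simp flip: of_nat_le_iff)
  finally show ?thesis
    unfolding m_def .
qed

lemma net_union_bound_lt:
  fixes u p \<delta> :: real and n :: nat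
  assumes "u \<ge> 8" and "0 \<le> p" and "64 * p \<le> 9" and "0 < \<delta>" and "\<delta> < 1"
    and n: "real n > 2 * u^2 * ln (2/\<delta>)"
  shows "(2*u + 3)^2 * (2^n * p^(n div 2 + 1)) < \<delta>"
proof -
  define \<Lambda> where "\<Lambda> = ln (2/\<delta>)"
  have "ln 2 \<le> \<Lambda>"
    unfolding \<Lambda>_def using assms(4,5) by (subst ln_le_cancel_iff) (auto simp: field_simps)
  then have "1/2 \<le> \<Lambda>"
    using ln2_ge_two_thirds by linarith
  have \<delta>: "\<delta> = 2 * exp (-\<Lambda>)"
    unfolding \<Lambda>_def using assms(4) by (simp add: exp_minus field_simps)
  have "2^n * p^(n div 2 + 1) \<le> exp (- (7/32) * real n)"
    using assms(2,3) by (rule pow2_mult_pow_half_le_exp)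
  also have "\<dots> < exp (-\<Lambda>) * exp (- (7/16 * u^2 - 1) * \<Lambda>)"
    using n unfolding \<Lambda>_def by (simp flip: exp_add add: algebra_simps)
  also have "\<dots> \<le> exp (-\<Lambda>) * exp (- (7*u^2/32 - 1/2))"
  proof -
    have "64 \<le> u^2"
      using power_mono[OF assms(1), of 2] by simp
    then have "(7/16 * u^2 - 1) * (1/2) \<le> (7/16 * u^2 - 1) * \<Lambda>"
      using \<open>1/2 \<le> \<Lambda>\<close> by (intro mult_left_mono) auto
    then have "- (7/16 * u^2 - 1) * \<Lambda> \<le> - (7*u^2/32 - 1/2)"
      by (simp add: algebra_simps)
    then show ?thesis
      by (intro mult_left_mono exp_mono) auto
  qed
  finally have "(2*u + 3)^2 * (2^n * p^(n div 2 + 1))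
                  < (2*u + 3)^2 * (exp (-\<Lambda>) * exp (- (7*u^2/32 - 1/2)))"
    using assms(1) by (intro mult_strict_left_mono) auto
  also have "\<dots> \<le> 2 * exp (7*u^2/32 - 1/2) * (exp (-\<Lambda>) * exp (- (7*u^2/32 - 1/2)))"
    using quadratic_le_exp[OF assms(1)] by (intro mult_right_mono) auto
  also have "\<dots> = \<delta>"
    unfolding \<delta> by (simp add: exp_minus field_simps)
  finally show ?thesis .
qed

lemma nearest_net_parameters:
  fixes R C :: real
  assumes "1 \<le> C * pi * R^2" and "k \<ge> 1" and "R > 0" and "C > 0"
  defines "L \<equiv> 1 / (4 * pi * R * C * (real k + 1))"
  shows "8 \<le> R / L" and "64 * (real k * (C * pi * (3 * L)^2)) \<le> 9"
proof -
  have R_div_L: "R / L = 4 * (C * pi * R^2) * (real k + 1)"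
    unfolding L_def using assms(3) by (simp add: field_simps power2_eq_square)
  show "8 \<le> R / L"
    unfolding R_div_L using assms(1,2) mult_mono[OF assms(1), of 2 "real k + 1"] by (simp add: ac_simps)
  have "4 * real k \<le> (real k + 1)^2"
    using sum_squares_ge_zero[of "real k - 1" 0] by (simp add: power2_eq_square algebra_simps)
  also have "\<dots> \<le> (C * pi * R^2) * (real k + 1)^2"
    using assms(1) by (simp add: mult_le_cancel_right1)
  finally have "64 * (real k * (C * pi * (3 * L)^2)) \<le> 64 * ((C * pi * R^2) * (real k + 1)^2 / 4 * (C * pi * (3 * L)^2))"
    using assms(4) by (intro mult_left_mono mult_right_mono) auto
  also have "\<dots> = 9"
  proof -
    have "\<And>K. K > 0 \<Longrightarrow> 64 * (C * pi * R^2 * K^2 / 4 * (C * pi * (3 * (1 / (4 * pi * R * C * K)))^2)) = 9"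
      using assms(3,4) by (simp add: field_simps power2_eq_square)
    from this[of "real k + 1"] show ?thesis
      unfolding L_def by simp
  qed
  finally show "64 * (real k * (C * pi * (3 * L)^2)) \<le> 9" .
qed

lemma nearest_net_failure_lt:
  fixes R C \<eta> \<delta> :: real and k n :: nat
  defines "L \<equiv> 1 / (4 * pi * R * C * (real k + 1))"
  assumes "1 \<le> C * pi * R^2" and "k \<ge> 1" and "R > 0" and "C > 0"
    and "0 < \<eta>" and "\<eta> < L" and "0 < \<delta>" and "\<delta> < 1"
    and n: "real n > 2 * R^2 / \<eta>^2 * ln (2 / \<delta>)"
  shows "(2*R/L + 3)^2 * (2^n * (real k * (C * pi * (3*L)^2)) ^ (n div 2 + 1)) < \<delta>"
proof -
  have "(R / L)^2 \<le> R^2 / \<eta>^2"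
    using \<open>0 < \<eta>\<close> \<open>\<eta> < L\<close> \<open>R > 0\<close> by (simp add: power_divide frac_le power_mono)
  then have "2 * (R / L)^2 * ln (2 / \<delta>) \<le> 2 * R^2 / \<eta>^2 * ln (2 / \<delta>)"
    using \<open>0 < \<delta>\<close> \<open>\<delta> < 1\<close> by (intro mult_right_mono) auto
  then have "real n > 2 * (R / L)^2 * ln (2 / \<delta>)"
    using n by linarith
  then have "(2 * (R/L) + 3)^2 * (2^n * (real k * (C * pi * (3*L)^2)) ^ (n div 2 + 1)) < \<delta>"
    using nearest_net_parameters[OF assms(2-5)] \<open>C > 0\<close> \<open>0 < \<delta>\<close> \<open>\<delta> < 1\<close>
    unfolding L_def by (intro net_union_bound_lt) auto
  then show ?thesis
    by simp
qed

lemma (in prob_space) prob_Union_many_near_le: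
  fixes P :: "nat \<Rightarrow> nat \<Rightarrow> 'a \<Rightarrow> real \<times> real"
  assumes "finite G" and "m \<ge> 1" and "r \<ge> 0" and "C \<ge> 0"
    and distr: "\<And>i j. i \<in> {1..n} \<Longrightarrow> j \<in> {1..k} \<Longrightarrow> distributed M lborel (P i j) (\<lambda>z. ennreal (f i z))"
    and bound: "\<And>i. i \<in> {1..n} \<Longrightarrow> AE z in lborel. f i z \<le> C"
    and indep: "indep_vars (\<lambda>_. lborel) (\<lambda>p. P (fst p) (snd p)) ({1..n} \<times> {1..k})"
  shows "prob (\<Union>g\<in>G. {\<omega> \<in> space M. m \<le> card {i\<in>{1..n}. \<exists>j\<in>{1..k}. P i j \<omega> \<in> ball g r}})
           \<le> real (card G) * (2^n * (real k * (C * pi * r^2)) ^ m)"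
proof -
  define Bad where "Bad = (\<lambda>g. {\<omega> \<in> space M. m \<le> card {i\<in>{1..n}. \<exists>j\<in>{1..k}. P i j \<omega> \<in> ball g r}})"
  have "Bad g \<in> events" for g
    unfolding Bad_def using distributed_measurable[OF distr] by (intro events_many_near) auto
  then have "prob (\<Union>g\<in>G. Bad g) \<le> (\<Sum>g\<in>G. prob (Bad g))"
    using \<open>finite G\<close> by (intro measure_UNION_le) auto
  also have "\<dots> \<le> real (card G) * (2^n * (real k * (C * pi * r^2)) ^ m)"
  proof (rule sum_bounded_above)
    fix g
    have "prob (Bad g) \<le> real (n choose m) * (real k * (C * pi * r^2)) ^ m"
      using prob_many_near_le[OF indep finite_atLeastAtMost finite_atLeastAtMost assms(2-4) distr bound]
      unfolding Bad_def by simp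
    also have "\<dots> \<le> 2^n * (real k * (C * pi * r^2)) ^ m"
      using binomial_le_pow2[of n m] \<open>C \<ge> 0\<close>
      by (intro mult_right_mono) (simp_all flip: of_nat_le_iff)
    finally show "prob (Bad g) \<le> 2^n * (real k * (C * pi * r^2)) ^ m" .
  qed
  finally show ?thesis
    unfolding Bad_def .
qed

lemma (in prob_space) prob_mean_nearest_dist_ge:
  fixes P :: "nat \<Rightarrow> nat \<Rightarrow> 'a \<Rightarrow> real \<times> real"
  assumes "k \<ge> 1" and "n > 0" and "L > 0" and "R \<ge> 0" and "C \<ge> 0"
    and distr: "\<And>i j. i \<in> {1..n} \<Longrightarrow> j \<in> {1..k} \<Longrightarrow> distributed M lborel (P i j) (\<lambda>z. ennreal (f i z))"
    and bound: "\<And>i. i \<in> {1..n} \<Longrightarrow> AE z in lborel. f i z \<le> C"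
    and indep: "indep_vars (\<lambda>_. lborel) (\<lambda>p. P (fst p) (snd p)) ({1..n} \<times> {1..k})"
  shows "1 - (2*R/L + 3)^2 * (2^n * (real k * (C * pi * (3*L)^2)) ^ (n div 2 + 1))
           \<le> prob {\<omega> \<in> space M. \<forall>z\<in>cball 0 R. L \<le> mean_nearest_dist n k P \<omega> z}"
proof -
  define p where "p = real k * (C * pi * (3*L)^2)"
  define Good where "Good = {\<omega> \<in> space M. \<forall>z\<in>cball 0 R. L \<le> mean_nearest_dist n k P \<omega> z}"
  obtain G :: "(real \<times> real) set" where "finite G" and card_G: "real (card G) \<le> (2*R/L + 3)^2"
    and net: "\<And>z. z \<in> cball 0 R \<Longrightarrow> \<exists>g\<in>G. dist z g \<le> L"
    using finite_net_cball_2[OF \<open>L > 0\<close> \<open>R \<ge> 0\<close>] by blast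
  define Bad where
    "Bad = (\<Union>g\<in>G. {\<omega> \<in> space M. n div 2 + 1 \<le> card {i\<in>{1..n}. \<exists>j\<in>{1..k}. P i j \<omega> \<in> ball g (3*L)}})"
  have P_meas: "P i j \<in> borel_measurable M" if "i \<in> {1..n}" "j \<in> {1..k}" for i j
    using distributed_measurable[OF distr[OF that]] by simp
  have "Bad \<in> events"
    unfolding Bad_def using \<open>finite G\<close> P_meas by (intro sets.finite_UN events_many_near) auto
  have "prob Bad \<le> real (card G) * (2^n * p ^ (n div 2 + 1))"
    unfolding Bad_def p_def using \<open>L > 0\<close>
    by (intro prob_Union_many_near_le[OF \<open>finite G\<close> _ _ \<open>C \<ge> 0\<close> distr bound indep]) auto
  also have "\<dots> \<le> (2*R/L + 3)^2 * (2^n * p ^ (n div 2 + 1))"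
    using card_G \<open>C \<ge> 0\<close> unfolding p_def by (intro mult_right_mono) auto
  finally have prob_Bad: "prob Bad \<le> (2*R/L + 3)^2 * (2^n * p ^ (n div 2 + 1))" .
  have "space M - Bad \<subseteq> Good"
  proof
    fix \<omega> assume \<omega>: "\<omega> \<in> space M - Bad"
    have few: "card {i\<in>{1..n}. \<exists>j\<in>{1..k}. P i j \<omega> \<in> ball g (3 * L)} \<le> n div 2" if "g \<in> G" for g
      using \<omega> that unfolding Bad_def by (simp add: not_le less_Suc_eq_le)
    have "L \<le> mean_nearest_dist n k P \<omega> z" if "z \<in> cball 0 R" for z
      using that net few by (rule mean_nearest_dist_ge_if_few_near[OF \<open>k \<ge> 1\<close> \<open>n > 0\<close>])
    then show "\<omega> \<in> Good"
      using \<omega> unfolding Good_def by blast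
  qed
  moreover have "Good \<in> events"
    unfolding Good_def using \<open>k \<ge> 1\<close> P_meas by (rule events_mean_nearest_dist_ge)
  ultimately have "prob (space M - Bad) \<le> prob Good"
    by (rule finite_measure_mono)
  then show ?thesis
    using prob_Bad prob_compl[OF \<open>Bad \<in> events\<close>] unfolding Good_def p_def by linarith
qed

theorem mainTheorem14:
  fixes M :: "'a measure"
    and P :: "nat \<Rightarrow> nat \<Rightarrow> 'a \<Rightarrow> real \<times> real"
    and f :: "nat \<Rightarrow> real \<times> real \<Rightarrow> real"
    and n k :: nat and R C0 \<eta> \<delta> :: real
  assumes "prob_space M"
    and "k \<ge> 1"
    and "R > 0" and "C0 > 0"
    and f_meas: "\<And>i. i \<in> {1..n} \<Longrightarrow> f i \<in> borel_measurable lborel"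
    and f_nonneg: "\<And>i z. i \<in> {1..n} \<Longrightarrow> f i z \<ge> 0"
    and f_bound: "\<And>i. i \<in> {1..n} \<Longrightarrow> AE z in lborel. z \<in> cball 0 R \<longrightarrow> f i z \<le> C0"
    and f_supp: "\<And>i z. i \<in> {1..n} \<Longrightarrow> z \<notin> cball 0 R \<Longrightarrow> f i z = 0"
    and distr: "\<And>i j. i \<in> {1..n} \<Longrightarrow> j \<in> {1..k} \<Longrightarrow>
                  distributed M lborel (P i j) (\<lambda>z. ennreal (f i z))"
    and indep: "prob_space.indep_vars M (\<lambda>_. lborel) (\<lambda>p. P (fst p) (snd p)) ({1..n} \<times> {1..k})"
    and "\<eta> > 0" and "0 < \<delta>" and "\<delta> < 1"
    and "real n > 2 * R^2 / \<eta>^2 * ln (2 / \<delta>)"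
  shows "measure M {\<omega> \<in> space M. \<forall>z \<in> cball 0 R.
            mean_nearest_dist n k P \<omega> z \<ge> 1 / (4 * pi * R * C0 * (real k + 1)) - \<eta>} > 1 - \<delta>"
proof -
  interpret prob_space M by fact
  define L where "L = 1 / (4 * pi * R * C0 * (real k + 1))"
  define Good where "Good = (\<lambda>c. {\<omega> \<in> space M. \<forall>z\<in>cball 0 R. c \<le> mean_nearest_dist n k P \<omega> z})"
  have "0 < 2 * R^2 / \<eta>^2 * ln (2 / \<delta>)"
    using \<open>R > 0\<close> \<open>\<eta> > 0\<close> \<open>0 < \<delta>\<close> \<open>\<delta> < 1\<close> by simp
  then have "n > 0"
    using \<open>real n > 2 * R^2 / \<eta>^2 * ln (2 / \<delta>)\<close> by simp
  have P_meas: "P i j \<in> borel_measurable M" if "i \<in> {1..n}" "j \<in> {1..k}" for i j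
    using distributed_measurable[OF distr[OF that]] by simp
  have bound: "AE z in lborel. f i z \<le> C0" if "i \<in> {1..n}" for i
    using f_bound[OF that] by eventually_elim (use f_supp[OF that] \<open>C0 > 0\<close> in fastforce)
  have "1 \<le> C0 * pi * R^2"
    using \<open>n > 0\<close> \<open>k \<ge> 1\<close> \<open>R > 0\<close> \<open>C0 > 0\<close> f_bound f_supp
    by (intro density_bound_area_ge_1[OF distr[of 1 1]]) auto
  show ?thesis
  proof (cases "\<eta> < L")
    case True
    have "1 - \<delta> < prob (Good L)"
      using prob_mean_nearest_dist_ge[OF \<open>k \<ge> 1\<close> \<open>n > 0\<close> _ _ _ distr bound indep, of L R]
        nearest_net_failure_lt[OF \<open>1 \<le> C0 * pi * R^2\<close> assms(2-4) \<open>\<eta> > 0\<close> True[unfolded L_def] assms(12-14)]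
        \<open>R > 0\<close> \<open>C0 > 0\<close>
      unfolding Good_def L_def by simp
    also have "\<dots> \<le> prob (Good (L - \<eta>))"
      unfolding Good_def using \<open>\<eta> > 0\<close> \<open>k \<ge> 1\<close> P_meas
      by (intro finite_measure_mono events_mean_nearest_dist_ge) auto
    finally show ?thesis
      unfolding Good_def L_def .
  next
    case False
    then have "L - \<eta> \<le> mean_nearest_dist n k P \<omega> z" for \<omega> z
      using mean_nearest_dist_nonneg[OF \<open>k \<ge> 1\<close>, of n P \<omega> z] by linarith
    then show ?thesis
      using \<open>0 < \<delta>\<close> unfolding L_def by (simp add: prob_space)
  qed
qed

end
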